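(* There is no graph class $\mathcal{F}$ such that, for all graphs $G$ and $H$, any one of the following holds: (1) $G\equiv_{\mathcal{F}}H$ iff $a(G)=a(H)$, where $a$ denotes the order of the automorphism group; (2) $G\equiv_{\mathcal{F}}H$ iff $\alpha(G)=\alpha(H)$, where $\alpha$ is the size of a largest independent set; (3) $G\equiv_{\mathcal{F}}H$ iff $\omega(G)=\omega(H)$, where $\omega$ is the size of a largest clique; (4) $G\equiv_{\mathcal{F}}H$ iff $\chi(G)=\chi(H)$, where $\chi$ is the chromatic number.
   Context: All graphs are finite, undirected, without multiple edges. $\hom(F,G)$ counts homomorphisms $F\to G$; $G\equiv_{\mathcal{F}}H$ means $\hom(F,G)=\hom(F,H)$ for all $F\in\mathcal{F}$. *)

theory Defs
  imports "HOL-Library.FuncSet"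
begin

text \<open>A finite simple undirected graph: a finite vertex set together with a
  symmetric, irreflexive edge relation on it (edges stored as ordered pairs in
  both directions).\<close>

type_synonym graph = "nat set \<times> (nat \<times> nat) set"

abbreviation verts :: "graph \<Rightarrow> nat set" where "verts G \<equiv> fst G"
abbreviation edges :: "graph \<Rightarrow> (nat \<times> nat) set" where "edges G \<equiv> snd G"

definition is_graph :: "graph \<Rightarrow> bool" where
  "is_graph G \<longleftrightarrow> finite (verts G) \<and> edges G \<subseteq> verts G \<times> verts G
     \<and> sym (edges G) \<and> irrefl (edges G)"

definition homs :: "graph \<Rightarrow> graph \<Rightarrow> (nat \<Rightarrow> nat) set" where
  "homs F G = {h \<in> verts F \<rightarrow>\<^sub>E verts G.
      \<forall>u v. (u, v) \<in> edges F \<longrightarrow> (h u, h v) \<in> edges G}"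

definition hom :: "graph \<Rightarrow> graph \<Rightarrow> nat" where
  "hom F G = card (homs F G)"

definition hom_equiv :: "graph set \<Rightarrow> graph \<Rightarrow> graph \<Rightarrow> bool" where
  "hom_equiv \<F> G H \<longleftrightarrow> (\<forall>F\<in>\<F>. hom F G = hom F H)"

definition auts :: "graph \<Rightarrow> (nat \<Rightarrow> nat) set" where
  "auts G = {\<sigma> \<in> verts G \<rightarrow>\<^sub>E verts G. bij_betw \<sigma> (verts G) (verts G) \<and>
      (\<forall>u\<in>verts G. \<forall>v\<in>verts G. (u, v) \<in> edges G \<longleftrightarrow> (\<sigma> u, \<sigma> v) \<in> edges G)}"

definition aut_order :: "graph \<Rightarrow> nat" where
  "aut_order G = card (auts G)"

definition independence_number :: "graph \<Rightarrow> nat" where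
  "independence_number G = Max {card S | S. S \<subseteq> verts G \<and>
      (\<forall>u\<in>S. \<forall>v\<in>S. (u, v) \<notin> edges G)}"

definition clique_number :: "graph \<Rightarrow> nat" where
  "clique_number G = Max {card S | S. S \<subseteq> verts G \<and>
      (\<forall>u\<in>S. \<forall>v\<in>S. u \<noteq> v \<longrightarrow> (u, v) \<in> edges G)}"

definition chromatic_number :: "graph \<Rightarrow> nat" where
  "chromatic_number G = (LEAST k. \<exists>c \<in> verts G \<rightarrow> {..<k}.
      \<forall>u v. (u, v) \<in> edges G \<longrightarrow> c u \<noteq> c v)"

end

theory Submission
  imports Defs
begin

text \<open>Every graph F with hom(F,K1) \<noteq> hom(F,K2) also has hom(F,K2) \<noteq> hom(F,P3): if F has an
  edge then hom(F,K1) = 0, so F maps to K2, and reflecting such a map onto the other edge of the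
  path P3 gives a homomorphism F \<rightarrow> P3 not landing in its subgraph K2; if F is edgeless on n
  vertices the three counts are 1, 2^n, 3^n with n > 0. Similarly hom(F,E2) \<noteq> hom(F,K1)
  forces hom(F,K1) \<noteq> hom(F,K2), E2 being the edgeless graph on two vertices. So no class can
  separate K1 from K2 while identifying K2 with P3, as equality of a, \<omega> or \<chi> (values 1, 2, 2)
  would demand, nor separate E2 from K1 while identifying K1 with K2, as \<alpha> (values 2, 1, 1)
  would demand.\<close>

lemma homs_mono:
  assumes "verts G \<subseteq> verts H" "edges G \<subseteq> edges H"
  shows "homs F G \<subseteq> homs F H"
  using assms PiE_mono by (fastforce simp: homs_def)

lemma finite_homs:
  assumes "finite (verts F)" "finite (verts G)"
  shows "finite (homs F G)"
proof -
  have "finite (verts F \<rightarrow>\<^sub>E verts G)"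
    using assms by (intro finite_PiE)
  then show ?thesis
    by (rule rev_finite_subset) (auto simp: homs_def)
qed

lemma hom_from_edgeless:
  assumes "finite (verts F)" "edges F = {}"
  shows "hom F G = card (verts G) ^ card (verts F)"
proof -
  have "homs F G = verts F \<rightarrow>\<^sub>E verts G"
    using assms(2) by (auto simp: homs_def)
  then show ?thesis
    using assms(1) by (simp add: hom_def card_PiE)
qed

lemma hom_to_edgeless:
  assumes "edges F \<noteq> {}" "edges G = {}"
  shows "hom F G = 0"
proof -
  have "homs F G = {}"
    using assms by (auto simp: homs_def)
  then show ?thesis
    by (simp add: hom_def)
qed

lemma restrict_comp_in_homs:
  assumes "is_graph F" "h \<in> homs F G" "g \<in> homs G H"
  shows "restrict (g \<circ> h) (verts F) \<in> homs F H"
proof -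
  have "edges F \<subseteq> verts F \<times> verts F"
    using assms(1) by (simp add: is_graph_def)
  then show ?thesis
    using assms(2,3) by (fastforce simp: homs_def)
qed

lemma Max_card_subsets_eqI:
  assumes "finite V" "T \<subseteq> V" "P T" "\<And>S. S \<subseteq> V \<Longrightarrow> P S \<Longrightarrow> card S \<le> card T"
  shows "Max {card S | S. S \<subseteq> V \<and> P S} = card T"
proof (rule Max_eqI)
  have "{card S | S. S \<subseteq> V \<and> P S} \<subseteq> card ` Pow V"
    by auto
  with assms(1) show "finite {card S | S. S \<subseteq> V \<and> P S}"
    by (meson finite_Pow_iff finite_imageI finite_subset)
qed (use assms(2-4) in auto)

lemma independence_number_edgeless:
  assumes "is_graph G" "edges G = {}"
  shows "independence_number G = card (verts G)"
  unfolding independence_number_def using assms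
  by (intro Max_card_subsets_eqI) (auto simp: is_graph_def intro: card_mono)

lemma independence_number_complete:
  assumes "is_graph G" "verts G \<noteq> {}"
    and "\<forall>u\<in>verts G. \<forall>v\<in>verts G. u \<noteq> v \<longrightarrow> (u, v) \<in> edges G"
  shows "independence_number G = 1"
proof -
  obtain w where "w \<in> verts G"
    using assms(2) by blast
  have "card S \<le> card {w}"
    if "S \<subseteq> verts G" "\<forall>u\<in>S. \<forall>v\<in>S. (u, v) \<notin> edges G" for S
  proof -
    have "finite S"
      using assms(1) that(1) finite_subset by (auto simp: is_graph_def)
    moreover have "\<forall>u\<in>S. \<forall>v\<in>S. u = v"
      using that assms(3) by blast
    ultimately show ?thesis
      by (simp add: card_le_Suc0_iff_eq)
  qed
  then show ?thesis
    unfolding independence_number_def using assms(1) \<open>w \<in> verts G\<close>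
    by (subst Max_card_subsets_eqI[where T = "{w}"]) (auto simp: is_graph_def irrefl_def)
qed

lemma clique_number_complete:
  assumes "is_graph G" "\<forall>u\<in>verts G. \<forall>v\<in>verts G. u \<noteq> v \<longrightarrow> (u, v) \<in> edges G"
  shows "clique_number G = card (verts G)"
  unfolding clique_number_def using assms
  by (intro Max_card_subsets_eqI) (auto simp: is_graph_def intro: card_mono)

lemma chromatic_number_edgeless:
  assumes "verts G \<noteq> {}" "edges G = {}"
  shows "chromatic_number G = 1"
  unfolding chromatic_number_def
proof (rule Least_equality)
  show "\<exists>c\<in>verts G \<rightarrow> {..<1::nat}. \<forall>u v. (u, v) \<in> edges G \<longrightarrow> c u \<noteq> c v"
    using assms(2) by (intro bexI[of _ "\<lambda>_. 0"]) auto
  fix k :: nat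
  assume "\<exists>c\<in>verts G \<rightarrow> {..<k}. \<forall>u v. (u, v) \<in> edges G \<longrightarrow> c u \<noteq> c v"
  with assms(1) show "1 \<le> k"
    by (metis Pi_mem all_not_in_conv lessThan_iff less_one not_less_zero linorder_not_less)
qed

lemma chromatic_number_eq_2I:
  fixes c :: "nat \<Rightarrow> nat"
  assumes "is_graph G" "edges G \<noteq> {}"
    and "c \<in> verts G \<rightarrow> {..<2}" "\<forall>u v. (u, v) \<in> edges G \<longrightarrow> c u \<noteq> c v"
  shows "chromatic_number G = 2"
  unfolding chromatic_number_def
proof (rule Least_equality)
  show "\<exists>c\<in>verts G \<rightarrow> {..<2::nat}. \<forall>u v. (u, v) \<in> edges G \<longrightarrow> c u \<noteq> c v"
    using assms(3,4) by blast
  fix k :: nat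
  assume "\<exists>c\<in>verts G \<rightarrow> {..<k}. \<forall>u v. (u, v) \<in> edges G \<longrightarrow> c u \<noteq> c v"
  then obtain c' where c': "c' \<in> verts G \<rightarrow> {..<k}" "\<forall>u v. (u, v) \<in> edges G \<longrightarrow> c' u \<noteq> c' v"
    by blast
  obtain u v where "(u, v) \<in> edges G"
    using assms(2) by auto
  moreover from this have "u \<in> verts G" "v \<in> verts G"
    using assms(1) by (auto simp: is_graph_def)
  ultimately have "c' u < k" "c' v < k" "c' u \<noteq> c' v"
    using c' by auto
  then show "2 \<le> k"
    by linarith
qed

lemma PiE_eq_restrictI:
  assumes "s \<in> A \<rightarrow>\<^sub>E B" "\<And>x. x \<in> A \<Longrightarrow> s x = f x"
  shows "s = restrict f A"
proof -
  have "s = restrict s A"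
    using assms(1) by simp
  also have "\<dots> = restrict f A"
    using assms(2) by (rule restrict_ext)
  finally show ?thesis .
qed

definition K1 :: graph where "K1 = ({0}, {})"
definition K2 :: graph where "K2 = ({0, 1}, {(0, 1), (1, 0)})"
definition E2 :: graph where "E2 = ({0, 1}, {})"
definition P3 :: graph where "P3 = ({0, 1, 2}, {(0, 1), (1, 0), (1, 2), (2, 1)})"

lemma small_graphs: "is_graph K1" "is_graph K2" "is_graph E2" "is_graph P3"
  by (auto simp: is_graph_def K1_def K2_def E2_def P3_def sym_def irrefl_def)

lemma small_graphs_nonempty: "verts K1 \<noteq> {}" "verts K2 \<noteq> {}" "verts E2 \<noteq> {}" "verts P3 \<noteq> {}"
  by (simp_all add: K1_def K2_def E2_def P3_def)

lemma small_graphs_card: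
  "card (verts K1) = 1" "card (verts K2) = 2" "card (verts E2) = 2" "card (verts P3) = 3"
  by (simp_all add: K1_def K2_def E2_def P3_def)

lemma small_graphs_edges: "edges K1 = {}" "edges E2 = {}"
  by (simp_all add: K1_def E2_def)

lemma hom_K2_less_hom_P3:
  assumes "is_graph F" "edges F \<noteq> {}" "hom F K2 \<noteq> 0"
  shows "hom F K2 < hom F P3"
proof -
  obtain h where h: "h \<in> homs F K2"
    using assms(3) unfolding hom_def by (metis card.empty ex_in_conv)
  define reflect :: "nat \<Rightarrow> nat" where "reflect = restrict (\<lambda>x. 2 - x) {0, 1}"
  define h' where "h' = restrict (reflect \<circ> h) (verts F)"
  have "reflect \<in> homs K2 P3"
    by (auto simp: homs_def reflect_def K2_def P3_def)
  then have "h' \<in> homs F P3"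
    unfolding h'_def by (rule restrict_comp_in_homs[OF assms(1) h])
  moreover have "h' \<notin> homs F K2"
  proof
    assume h': "h' \<in> homs F K2"
    obtain u v where uv: "(u, v) \<in> edges F"
      using assms(2) by auto
    with assms(1) have "u \<in> verts F" "v \<in> verts F"
      by (auto simp: is_graph_def)
    moreover have "(h u, h v) \<in> edges K2"
      using h uv by (simp add: homs_def)
    ultimately have "h' u = 2 \<or> h' v = 2"
      by (auto simp: h'_def reflect_def K2_def)
    moreover have "h' u \<in> verts K2" "h' v \<in> verts K2"
      using h' \<open>u \<in> verts F\<close> \<open>v \<in> verts F\<close> by (auto simp: homs_def)
    ultimately show False
      by (auto simp: K2_def)
  qed
  moreover have "homs F K2 \<subseteq> homs F P3"
    by (rule homs_mono) (auto simp: K2_def P3_def)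
  moreover have "finite (homs F P3)"
    using assms(1) by (intro finite_homs) (auto simp: is_graph_def P3_def)
  ultimately have "card (homs F K2) < card (homs F P3)"
    by (intro psubset_card_mono) auto
  then show ?thesis
    by (simp add: hom_def)
qed

lemma hom_K2_neq_hom_P3_if_hom_K1_neq_hom_K2:
  assumes "is_graph F" "hom F K1 \<noteq> hom F K2"
  shows "hom F K2 \<noteq> hom F P3"
proof (cases "edges F = {}")
  case True
  define n where "n = card (verts F)"
  have "finite (verts F)"
    using assms(1) by (simp add: is_graph_def)
  then have "hom F K1 = 1" "hom F K2 = 2 ^ n" "hom F P3 = 3 ^ n"
    using True by (simp_all add: hom_from_edgeless n_def small_graphs_card)
  with assms(2) have "n \<noteq> 0"
    by (metis power_0)
  then have "(2::nat) ^ n < 3 ^ n"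
    by (intro power_strict_mono) auto
  with \<open>hom F K2 = 2 ^ n\<close> \<open>hom F P3 = 3 ^ n\<close> show ?thesis
    by simp
next
  case False
  then have "hom F K1 = 0"
    using hom_to_edgeless small_graphs_edges by blast
  with assms False show ?thesis
    using hom_K2_less_hom_P3 by fastforce
qed

lemma hom_K1_neq_hom_K2_if_hom_E2_neq_hom_K1:
  assumes "is_graph F" "hom F E2 \<noteq> hom F K1"
  shows "hom F K1 \<noteq> hom F K2"
proof (cases "edges F = {}")
  case True
  have "finite (verts F)"
    using assms(1) by (simp add: is_graph_def)
  with True have "hom F E2 = hom F K2"
    by (simp add: hom_from_edgeless small_graphs_card)
  with assms(2) show ?thesis
    by simp
next
  case False
  then have "hom F E2 = 0" "hom F K1 = 0"
    using hom_to_edgeless small_graphs_edges by blast+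
  with assms(2) show ?thesis
    by simp
qed

lemma hom_equiv_K1_K2_if_hom_equiv_K2_P3:
  assumes "\<F> \<subseteq> {F. is_graph F}" "hom_equiv \<F> K2 P3"
  shows "hom_equiv \<F> K1 K2"
  using assms hom_K2_neq_hom_P3_if_hom_K1_neq_hom_K2 unfolding hom_equiv_def by blast

lemma hom_equiv_E2_K1_if_hom_equiv_K1_K2:
  assumes "\<F> \<subseteq> {F. is_graph F}" "hom_equiv \<F> K1 K2"
  shows "hom_equiv \<F> E2 K1"
  using assms hom_K1_neq_hom_K2_if_hom_E2_neq_hom_K1 unfolding hom_equiv_def by blast

definition characterizes :: "graph set \<Rightarrow> (graph \<Rightarrow> nat) \<Rightarrow> bool" where
  "characterizes \<F> f \<longleftrightarrow> (\<forall>G H. is_graph G \<and> verts G \<noteq> {} \<and> is_graph H \<and> verts H \<noteq> {} \<longrightarrow>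
     (hom_equiv \<F> G H \<longleftrightarrow> f G = f H))"

lemma not_characterizes_if_separates_K1_K2_not_K2_P3:
  assumes "\<F> \<subseteq> {F. is_graph F}" "f K1 \<noteq> f K2" "f K2 = f P3"
  shows "\<not> characterizes \<F> f"
  using assms hom_equiv_K1_K2_if_hom_equiv_K2_P3 small_graphs small_graphs_nonempty
  unfolding characterizes_def by metis

lemma not_characterizes_if_separates_E2_K1_not_K1_K2:
  assumes "\<F> \<subseteq> {F. is_graph F}" "f E2 \<noteq> f K1" "f K1 = f K2"
  shows "\<not> characterizes \<F> f"
  using assms hom_equiv_E2_K1_if_hom_equiv_K1_K2 small_graphs small_graphs_nonempty
  unfolding characterizes_def by metis

lemma independence_numbers:
  "independence_number E2 = 2" "independence_number K1 = 1" "independence_number K2 = 1"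
proof -
  show "independence_number E2 = 2" "independence_number K1 = 1"
    using small_graphs small_graphs_edges
    by (simp_all add: independence_number_edgeless small_graphs_card)
  show "independence_number K2 = 1"
    using small_graphs(2) small_graphs_nonempty(2)
    by (rule independence_number_complete) (auto simp: K2_def)
qed

lemma clique_numbers: "clique_number K1 = 1" "clique_number K2 = 2" "clique_number P3 = 2"
proof -
  have "clique_number K1 = card (verts K1)"
    by (rule clique_number_complete[OF small_graphs(1)]) (simp add: K1_def)
  moreover have "clique_number K2 = card (verts K2)"
    by (rule clique_number_complete[OF small_graphs(2)]) (simp add: K2_def)
  ultimately show "clique_number K1 = 1" "clique_number K2 = 2"
    by (simp_all add: small_graphs_card)
  have "card S \<le> card {0, 1::nat}"
    if "S \<subseteq> verts P3" "\<forall>u\<in>S. \<forall>v\<in>S. u \<noteq> v \<longrightarrow> (u, v) \<in> edges P3" for S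
  proof -
    have "(0, 2) \<notin> edges P3"
      by (simp add: P3_def)
    with that have "S \<subseteq> {0, 1} \<or> S \<subseteq> {1, 2}"
      by (auto simp: P3_def)
    then show ?thesis
      using card_mono[of "{0, 1::nat}" S] card_mono[of "{1, 2::nat}" S] by auto
  qed
  then show "clique_number P3 = 2"
    unfolding clique_number_def
    by (subst Max_card_subsets_eqI[where T = "{0, 1}"]) (auto simp: P3_def)
qed

lemma chromatic_numbers:
  "chromatic_number K1 = 1" "chromatic_number K2 = 2" "chromatic_number P3 = 2"
proof -
  show "chromatic_number K1 = 1"
    using small_graphs_nonempty(1) small_graphs_edges(1) by (rule chromatic_number_edgeless)
  show "chromatic_number K2 = 2"
    using small_graphs(2) by (rule chromatic_number_eq_2I[where c = id]) (auto simp: K2_def)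
  show "chromatic_number P3 = 2"
    using small_graphs(4)
    by (rule chromatic_number_eq_2I[where c = "\<lambda>x. x mod 2"]) (auto simp: P3_def)
qed

lemma aut_order_K1: "aut_order K1 = 1"
proof -
  have "auts K1 = {0} \<rightarrow>\<^sub>E {0}"
    by (auto simp: auts_def K1_def bij_betw_def)
  then show ?thesis
    by (simp add: aut_order_def)
qed

lemma aut_order_K2: "aut_order K2 = 2"
proof -
  have "auts K2 = {restrict id {0, 1}, restrict (\<lambda>x. 1 - x) {0, 1}}"
  proof (intro equalityI subsetI)
    fix s
    assume "s \<in> auts K2"
    then have s: "s \<in> {0, 1} \<rightarrow>\<^sub>E {0, 1}" "inj_on s {0, 1}"
      by (auto simp: auts_def K2_def bij_betw_def)
    have "s 0 \<in> {0, 1}" "s 1 \<in> {0, 1}" "s 0 \<noteq> s 1"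
      using s inj_onD[OF s(2), of 0 1] by auto
    then consider "s 0 = 0" "s 1 = 1" | "s 0 = 1" "s 1 = 0"
      by fastforce
    then show "s \<in> {restrict id {0, 1}, restrict (\<lambda>x. 1 - x) {0, 1}}"
    proof cases
      case 1
      then have "s = restrict id {0, 1}"
        by (intro PiE_eq_restrictI[OF s(1)]) auto
      then show ?thesis by simp
    next
      case 2
      then have "s = restrict (\<lambda>x. 1 - x) {0, 1}"
        by (intro PiE_eq_restrictI[OF s(1)]) auto
      then show ?thesis by simp
    qed
  next
    have "restrict id {0, 1} \<in> auts K2" "restrict (\<lambda>x. 1 - x) {0, 1} \<in> auts K2"
      by (auto simp: auts_def K2_def bij_betw_def inj_on_def)
    then show "s \<in> auts K2"
      if "s \<in> {restrict id {0, 1}, restrict (\<lambda>x. 1 - x) {0, 1}}" for s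
      using that by blast
  qed
  moreover have "restrict id {0, 1} \<noteq> restrict (\<lambda>x. 1 - x) {0, 1::nat}"
    by (auto dest: fun_cong[where x = 0])
  ultimately show ?thesis
    by (simp add: aut_order_def)
qed

lemma aut_order_P3: "aut_order P3 = 2"
proof -
  have "auts P3 = {restrict id {0, 1, 2}, restrict (\<lambda>x. 2 - x) {0, 1, 2}}"
  proof (intro equalityI subsetI)
    fix s
    assume "s \<in> auts P3"
    then have s: "s \<in> {0, 1, 2} \<rightarrow>\<^sub>E {0, 1, 2}" "inj_on s {0, 1, 2}"
      and edge_iff: "\<forall>u\<in>{0, 1, 2}. \<forall>v\<in>{0, 1, 2}. (u, v) \<in> edges P3 \<longleftrightarrow> (s u, s v) \<in> edges P3"
      by (auto simp: auts_def P3_def bij_betw_def)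
    have "(s 0, s 1) \<in> edges P3" "(s 1, s 2) \<in> edges P3"
      using edge_iff by (auto simp: P3_def)
    then consider "s 0 = 0" "s 1 = 1" "s 2 = 2" | "s 0 = 2" "s 1 = 1" "s 2 = 0"
      using inj_onD[OF s(2), of 0 2] by (auto simp: P3_def)
    then show "s \<in> {restrict id {0, 1, 2}, restrict (\<lambda>x. 2 - x) {0, 1, 2}}"
    proof cases
      case 1
      then have "s = restrict id {0, 1, 2}"
        by (intro PiE_eq_restrictI[OF s(1)]) auto
      then show ?thesis by simp
    next
      case 2
      then have "s = restrict (\<lambda>x. 2 - x) {0, 1, 2}"
        by (intro PiE_eq_restrictI[OF s(1)]) auto
      then show ?thesis by simp
    qed
  next
    have "restrict id {0, 1, 2} \<in> auts P3" "restrict (\<lambda>x. 2 - x) {0, 1, 2} \<in> auts P3"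
      by (auto simp: auts_def P3_def bij_betw_def inj_on_def)
    then show "s \<in> auts P3"
      if "s \<in> {restrict id {0, 1, 2}, restrict (\<lambda>x. 2 - x) {0, 1, 2}}" for s
      using that by blast
  qed
  moreover have "restrict id {0, 1, 2} \<noteq> restrict (\<lambda>x. 2 - x) {0, 1, 2::nat}"
    by (auto dest: fun_cong[where x = 0])
  ultimately show ?thesis
    by (simp add: aut_order_def)
qed

theorem corollary20:
  shows "\<not> (\<exists>\<F>. \<F> \<subseteq> {F. is_graph F} \<and>
     ((\<forall>G H. is_graph G \<and> verts G \<noteq> {} \<and> is_graph H \<and> verts H \<noteq> {} \<longrightarrow>
         (hom_equiv \<F> G H \<longleftrightarrow> aut_order G = aut_order H))
    \<or> (\<forall>G H. is_graph G \<and> verts G \<noteq> {} \<and> is_graph H \<and> verts H \<noteq> {} \<longrightarrow>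
         (hom_equiv \<F> G H \<longleftrightarrow> independence_number G = independence_number H))
    \<or> (\<forall>G H. is_graph G \<and> verts G \<noteq> {} \<and> is_graph H \<and> verts H \<noteq> {} \<longrightarrow>
         (hom_equiv \<F> G H \<longleftrightarrow> clique_number G = clique_number H))
    \<or> (\<forall>G H. is_graph G \<and> verts G \<noteq> {} \<and> is_graph H \<and> verts H \<noteq> {} \<longrightarrow>
         (hom_equiv \<F> G H \<longleftrightarrow> chromatic_number G = chromatic_number H))))"
  unfolding characterizes_def[symmetric]
proof
  assume "\<exists>\<F>. \<F> \<subseteq> {F. is_graph F} \<and>
    (characterizes \<F> aut_order \<or> characterizes \<F> independence_number
      \<or> characterizes \<F> clique_number \<or> characterizes \<F> chromatic_number)"
  then obtain \<F> where \<F>: "\<F> \<subseteq> {F. is_graph F}"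
    and "characterizes \<F> aut_order \<or> characterizes \<F> independence_number
      \<or> characterizes \<F> clique_number \<or> characterizes \<F> chromatic_number"
    by blast
  moreover have "\<not> characterizes \<F> aut_order"
    using \<F> by (rule not_characterizes_if_separates_K1_K2_not_K2_P3)
      (simp_all add: aut_order_K1 aut_order_K2 aut_order_P3)
  moreover have "\<not> characterizes \<F> independence_number"
    using \<F> by (rule not_characterizes_if_separates_E2_K1_not_K1_K2) (simp_all add: independence_numbers)
  moreover have "\<not> characterizes \<F> clique_number"
    using \<F> by (rule not_characterizes_if_separates_K1_K2_not_K2_P3) (simp_all add: clique_numbers)
  moreover have "\<not> characterizes \<F> chromatic_number"
    using \<F> by (rule not_characterizes_if_separates_K1_K2_not_K2_P3) (simp_all add: chromatic_numbers)
  ultimately show False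
    by blast
qed

end
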